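(* Let $\mathcal{N}(\rho)=\sum_{j\in [J]} R_j\rho R_j^{\dagger}$ be a CPTP map on $\mathcal{B}((\mathbb{C}^{\mathsf{p}})^{\otimes n})$. Let $\mathcal{C}\subset (\mathbb{C}^{\mathsf{p}})^{\otimes n}$ be a subspace with orthonormal basis $\{\psi_\alpha\}_{\alpha\in [K]}$. Define \[ \epsilon_{\mathsf{approx}}:=\max_{\alpha,\beta\in [K]}\sum_{j\in [J]}\big|\langle\psi_\alpha| R_j|\psi_\beta\rangle-\delta_{\alpha,\beta}\langle\psi_1| R_j|\psi_1\rangle\big|^2 . \] Let $\delta>K^5\epsilon_{\mathsf{approx}}$ be arbitrary. Then $\mathcal{C}$ is an $(\epsilon,\delta)$-approximate quantum error-detection code for $\mathcal{N}$ with $\epsilon = K^5\epsilon_{\mathsf{approx}}\, \delta^{-1}$.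
   Context: Let $P$ be the orthogonal projection onto a subspace $\mathcal{C}\subset(\mathbb{C}^\mathsf{p})^{\otimes n}$ and $\mathcal{N}$ a CPTP map on $\mathcal{B}((\mathbb{C}^\mathsf{p})^{\otimes n})$. $\mathcal{C}$ is called an $(\epsilon,\delta)$-approximate error-detection code for $\mathcal{N}$ if for every unit vector $|\Psi\rangle\in\mathcal{C}$ the following holds: if $\mathrm{tr}(P\mathcal{N}(|\Psi\rangle\langle\Psi|))\geq\delta$ then $\langle\Psi|\rho_{\mathcal{N},P}|\Psi\rangle\geq 1-\epsilon$, where $\rho_{\mathcal{N},P}=\mathrm{tr}(P\mathcal{N}(|\Psi\rangle\langle\Psi|))^{-1}\, P\mathcal{N}(|\Psi\rangle\langle\Psi|)P$. Here $[K]=\{1,\dots,K\}$. *)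

theory Defs
  imports "HOL-Analysis.Analysis" "Jordan_Normal_Form.Matrix"
begin

text \<open>Hilbert space (C^p)^{\<otimes>n} is modelled as complex vectors of dimension d = p^n
  (Jordan_Normal_Form vectors/matrices). The tensor-product structure plays no role.\<close>

definition cinner :: "complex vec \<Rightarrow> complex vec \<Rightarrow> complex" where
  "cinner u v = (\<Sum>i<dim_vec u. cnj (u $ i) * v $ i)"

definition adj :: "complex mat \<Rightarrow> complex mat" where
  "adj A = mat (dim_col A) (dim_row A) (\<lambda>(i,j). cnj (A $$ (j,i)))"

definition mtrace :: "complex mat \<Rightarrow> complex" where
  "mtrace A = (\<Sum>i<dim_row A. A $$ (i,i))"

definition ketbra :: "complex vec \<Rightarrow> complex mat" where
  "ketbra v = mat (dim_vec v) (dim_vec v) (\<lambda>(i,j). v $ i * cnj (v $ j))"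

definition kraus_map :: "nat \<Rightarrow> (nat \<Rightarrow> complex mat) \<Rightarrow> nat \<Rightarrow> complex mat \<Rightarrow> complex mat" where
  "kraus_map d R J \<rho> = mat d d (\<lambda>(i,k). \<Sum>j<J. (R j * \<rho> * adj (R j)) $$ (i,k))"

definition is_CPTP_kraus :: "nat \<Rightarrow> (nat \<Rightarrow> complex mat) \<Rightarrow> nat \<Rightarrow> bool" where
  "is_CPTP_kraus d R J \<longleftrightarrow> (\<forall>j<J. R j \<in> carrier_mat d d) \<and>
     mat d d (\<lambda>(i,k). \<Sum>j<J. (adj (R j) * R j) $$ (i,k)) = 1\<^sub>m d"

definition orthonormal_family :: "nat \<Rightarrow> (nat \<Rightarrow> complex vec) \<Rightarrow> nat \<Rightarrow> bool" where
  "orthonormal_family d \<psi> K \<longleftrightarrow> (\<forall>a<K. \<psi> a \<in> carrier_vec d) \<and>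
     (\<forall>a<K. \<forall>b<K. cinner (\<psi> a) (\<psi> b) = (if a = b then 1 else 0))"

definition span_family :: "nat \<Rightarrow> (nat \<Rightarrow> complex vec) \<Rightarrow> nat \<Rightarrow> complex vec set" where
  "span_family d \<psi> K = {vec d (\<lambda>i. \<Sum>a<K. c a * \<psi> a $ i) | c. True}"

definition is_orth_proj_onto :: "nat \<Rightarrow> complex mat \<Rightarrow> complex vec set \<Rightarrow> bool" where
  "is_orth_proj_onto d P C \<longleftrightarrow> P \<in> carrier_mat d d \<and> adj P = P \<and> P * P = P \<and>
     {P *\<^sub>v v | v. v \<in> carrier_vec d} = C"

text \<open>(eps,delta)-approximate error-detection code. The quantities tr(P N(|Psi><Psi|)) and
  <Psi|rho|Psi> are real; we compare their real parts.\<close>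
definition approx_detection_code ::
  "nat \<Rightarrow> (nat \<Rightarrow> complex mat) \<Rightarrow> nat \<Rightarrow> complex mat \<Rightarrow> complex vec set \<Rightarrow> real \<Rightarrow> real \<Rightarrow> bool" where
  "approx_detection_code d R J P C \<epsilon> \<delta> \<longleftrightarrow>
    (\<forall>\<Psi>\<in>C. \<Psi> \<in> carrier_vec d \<longrightarrow> cinner \<Psi> \<Psi> = 1 \<longrightarrow>
       (let Nrho = kraus_map d R J (ketbra \<Psi>); t = mtrace (P * Nrho);
            \<rho>NP = (1 / t) \<cdot>\<^sub>m (P * Nrho * P)
        in Re t \<ge> \<delta> \<longrightarrow> Re (cinner \<Psi> (\<rho>NP *\<^sub>v \<Psi>)) \<ge> 1 - \<epsilon>))"

text \<open>epsilon_approx; index 0 plays the role of the paper's index 1 (0-based indexing).\<close>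
definition eps_approx :: "(nat \<Rightarrow> complex mat) \<Rightarrow> nat \<Rightarrow> (nat \<Rightarrow> complex vec) \<Rightarrow> nat \<Rightarrow> real" where
  "eps_approx R J \<psi> K = Max {(\<Sum>j<J. (cmod (cinner (\<psi> a) (R j *\<^sub>v \<psi> b)
        - (if a = b then cinner (\<psi> 0) (R j *\<^sub>v \<psi> 0) else 0)))\<^sup>2) | a b. a < K \<and> b < K}"

end

theory Submission imports Defs begin

text \<open>Write \<open>\<Psi> = \<Sum>\<^sub>a c\<^sub>a \<psi>\<^sub>a\<close> and \<open>M\<^sup>j\<^sub>a\<^sub>b = \<langle>\<psi>\<^sub>a|R\<^sub>j|\<psi>\<^sub>b\<rangle>\<close>. The detection probability is
  \<open>t = \<Sum>\<^sub>j \<parallel>P R\<^sub>j \<Psi>\<parallel>\<^sup>2 = \<Sum>\<^sub>j \<parallel>M\<^sup>j c\<parallel>\<^sup>2\<close>, and \<open>t \<langle>\<Psi>|\<rho>|\<Psi>\<rangle> = \<Sum>\<^sub>j |\<langle>c, M\<^sup>j c\<rangle>|\<^sup>2\<close>.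
  For a unit vector \<open>c\<close> the quantity \<open>\<parallel>y\<parallel>\<^sup>2 - |\<langle>c, y\<rangle>|\<^sup>2\<close> does not change when a multiple of
  \<open>c\<close> is added to \<open>y\<close>; subtracting \<open>\<langle>\<psi>\<^sub>1|R\<^sub>j|\<psi>\<^sub>1\<rangle> c\<close> and applying Cauchy-Schwarz bounds the
  loss \<open>t (1 - \<langle>\<Psi>|\<rho>|\<Psi>\<rangle>)\<close> by \<open>K\<^sup>2 \<epsilon>\<^sub>a\<^sub>p\<^sub>p\<^sub>r\<^sub>o\<^sub>x \<le> K\<^sup>5 \<epsilon>\<^sub>a\<^sub>p\<^sub>p\<^sub>r\<^sub>o\<^sub>x\<close>, and \<open>t \<ge> \<delta>\<close> gives the claim.\<close>

subsection \<open>Matrix entries and the inner product\<close>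

lemma mult_mat_vec_index_sum:
  "A \<in> carrier_mat n d \<Longrightarrow> v \<in> carrier_vec d \<Longrightarrow> i < n \<Longrightarrow> (A *\<^sub>v v) $ i = (\<Sum>k<d. A $$ (i,k) * v $ k)"
  by (simp add: scalar_prod_def lessThan_atLeast0 mult.commute)

lemma mult_mat_index_sum:
  "A \<in> carrier_mat n m \<Longrightarrow> B \<in> carrier_mat m q \<Longrightarrow> i < n \<Longrightarrow> k < q \<Longrightarrow>
    (A * B) $$ (i,k) = (\<Sum>l<m. A $$ (i,l) * B $$ (l,k))"
  by (simp add: scalar_prod_def lessThan_atLeast0 mult.commute)

lemma adj_carrier_mat: "A \<in> carrier_mat n m \<Longrightarrow> adj A \<in> carrier_mat m n"
  by (simp add: adj_def)

lemma adj_index: "A \<in> carrier_mat n m \<Longrightarrow> i < m \<Longrightarrow> k < n \<Longrightarrow> adj A $$ (i,k) = cnj (A $$ (k,i))"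
  by (simp add: adj_def)

lemma ketbra_carrier_mat: "v \<in> carrier_vec d \<Longrightarrow> ketbra v \<in> carrier_mat d d"
  by (simp add: ketbra_def)

lemma ketbra_index: "v \<in> carrier_vec d \<Longrightarrow> i < d \<Longrightarrow> k < d \<Longrightarrow> ketbra v $$ (i,k) = v $ i * cnj (v $ k)"
  by (simp add: ketbra_def)

lemma kraus_map_carrier_mat: "kraus_map d R J \<rho> \<in> carrier_mat d d"
  by (simp add: kraus_map_def)

lemma cinner_eq_sum: "u \<in> carrier_vec d \<Longrightarrow> cinner u v = (\<Sum>i<d. cnj (u $ i) * v $ i)"
  by (simp add: cinner_def)

lemma cinner_commute_cnj: "u \<in> carrier_vec d \<Longrightarrow> w \<in> carrier_vec d \<Longrightarrow> cinner u w = cnj (cinner w u)"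
  by (simp add: cinner_eq_sum mult.commute)

lemma cinner_mult_mat_vec_eq_sum:
  "A \<in> carrier_mat d d \<Longrightarrow> w \<in> carrier_vec d \<Longrightarrow>
    cinner w (A *\<^sub>v w) = (\<Sum>i<d. \<Sum>l<d. A $$ (i,l) * (w $ l * cnj (w $ i)))"
  by (simp add: cinner_eq_sum[of _ d] mult_mat_vec_index_sum[of _ d d] sum_distrib_left mult_ac
      del: index_mult_mat_vec)

lemma cinner_mult_mat_vec_adj:
  assumes "A \<in> carrier_mat d d" "u \<in> carrier_vec d" "w \<in> carrier_vec d"
  shows "cinner u (A *\<^sub>v w) = cinner (adj A *\<^sub>v u) w"
proof -
  have "cinner u (A *\<^sub>v w) = (\<Sum>i<d. \<Sum>k<d. cnj (u $ i) * (A $$ (i,k) * w $ k))"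
    using assms by (simp add: cinner_eq_sum mult_mat_vec_index_sum sum_distrib_left del: index_mult_mat_vec)
  also have "\<dots> = (\<Sum>k<d. \<Sum>i<d. cnj (u $ i) * (A $$ (i,k) * w $ k))"
    by (rule sum.swap)
  also have "\<dots> = (\<Sum>k<d. cnj ((adj A *\<^sub>v u) $ k) * w $ k)"
    using assms adj_carrier_mat[OF assms(1)]
    by (simp add: mult_mat_vec_index_sum adj_index sum_distrib_left mult_ac del: index_mult_mat_vec)
  also have "\<dots> = cinner (adj A *\<^sub>v u) w"
    using assms adj_carrier_mat[OF assms(1)] by (simp add: cinner_def del: index_mult_mat_vec)
  finally show ?thesis .
qed

lemma cinner_smult_mat_vec:
  "A \<in> carrier_mat d d \<Longrightarrow> u \<in> carrier_vec d \<Longrightarrow> w \<in> carrier_vec d \<Longrightarrow>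
    cinner u ((s \<cdot>\<^sub>m A) *\<^sub>v w) = s * cinner u (A *\<^sub>v w)"
  by (simp add: cinner_eq_sum[of _ d] mult_mat_vec_index_sum[of _ d d] sum_distrib_left mult_ac
      del: index_mult_mat_vec index_mult_mat)

lemma sandwich_ketbra_index:
  assumes "A \<in> carrier_mat d d" "v \<in> carrier_vec d" "i < d" "k < d"
  shows "(A * ketbra v * adj A) $$ (i,k) = (A *\<^sub>v v) $ i * cnj ((A *\<^sub>v v) $ k)"
proof -
  have Av: "(A * ketbra v) $$ (i,l) = (\<Sum>m<d. A $$ (i,m) * (v $ m * cnj (v $ l)))" if "l < d" for l
    using assms that ketbra_carrier_mat[OF assms(2)]
    by (simp add: mult_mat_index_sum[of _ d d _ d] ketbra_index del: index_mult_mat)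
  have "(A * ketbra v * adj A) $$ (i,k) = (\<Sum>l<d. (A * ketbra v) $$ (i,l) * adj A $$ (l,k))"
    using assms ketbra_carrier_mat[OF assms(2)] adj_carrier_mat[OF assms(1)]
    by (intro mult_mat_index_sum) auto
  also have "\<dots> = (\<Sum>l<d. (\<Sum>m<d. A $$ (i,m) * (v $ m * cnj (v $ l))) * cnj (A $$ (k,l)))"
    using assms by (intro sum.cong) (auto simp: Av adj_index)
  also have "\<dots> = (\<Sum>m<d. A $$ (i,m) * v $ m) * (\<Sum>l<d. cnj (A $$ (k,l) * v $ l))"
    by (simp add: sum_distrib_left sum_distrib_right mult_ac)
  also have "\<dots> = (A *\<^sub>v v) $ i * cnj ((A *\<^sub>v v) $ k)"
    using assms by (simp add: mult_mat_vec_index_sum del: index_mult_mat_vec)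
  finally show ?thesis .
qed

lemma kraus_map_ketbra_index:
  assumes "\<forall>j<J. R j \<in> carrier_mat d d" "v \<in> carrier_vec d" "i < d" "k < d"
  shows "kraus_map d R J (ketbra v) $$ (i,k) = (\<Sum>j<J. (R j *\<^sub>v v) $ i * cnj ((R j *\<^sub>v v) $ k))"
proof -
  have "kraus_map d R J (ketbra v) $$ (i,k) = (\<Sum>j<J. (R j * ketbra v * adj (R j)) $$ (i,k))"
    using assms(3,4) unfolding kraus_map_def by simp
  also have "\<dots> = (\<Sum>j<J. (R j *\<^sub>v v) $ i * cnj ((R j *\<^sub>v v) $ k))"
    using assms by (intro sum.cong) (auto intro: sandwich_ketbra_index)
  finally show ?thesis .
qed

lemma mtrace_mult_kraus_map_ketbra:
  assumes "\<forall>j<J. R j \<in> carrier_mat d d" "v \<in> carrier_vec d" "P \<in> carrier_mat d d"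
  shows "mtrace (P * kraus_map d R J (ketbra v)) = (\<Sum>j<J. cinner (R j *\<^sub>v v) (P *\<^sub>v (R j *\<^sub>v v)))"
proof -
  have "mtrace (P * kraus_map d R J (ketbra v))
      = (\<Sum>i<d. \<Sum>l<d. P $$ (i,l) * (\<Sum>j<J. (R j *\<^sub>v v) $ l * cnj ((R j *\<^sub>v v) $ i)))"
    unfolding mtrace_def using assms kraus_map_carrier_mat[of d R J "ketbra v"]
      index_mult_mat(2)[of P "kraus_map d R J (ketbra v)"]
    by (auto simp: mult_mat_index_sum[of _ d d _ d] kraus_map_ketbra_index
        intro!: sum.cong simp del: index_mult_mat_vec index_mult_mat)
  also have "\<dots> = (\<Sum>j<J. \<Sum>i<d. \<Sum>l<d. P $$ (i,l) * ((R j *\<^sub>v v) $ l * cnj ((R j *\<^sub>v v) $ i)))"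
    by (simp add: sum_distrib_left sum.swap[of _ "{..<J}"])
  also have "\<dots> = (\<Sum>j<J. cinner (R j *\<^sub>v v) (P *\<^sub>v (R j *\<^sub>v v)))"
    using assms by (intro sum.cong) (auto simp: cinner_mult_mat_vec_eq_sum)
  finally show ?thesis .
qed

lemma cinner_kraus_map_ketbra:
  assumes "\<forall>j<J. R j \<in> carrier_mat d d" "u \<in> carrier_vec d" "v \<in> carrier_vec d" "w \<in> carrier_vec d"
  shows "cinner u (kraus_map d R J (ketbra v) *\<^sub>v w) = (\<Sum>j<J. cinner u (R j *\<^sub>v v) * cinner (R j *\<^sub>v v) w)"
proof -
  have "cinner u (kraus_map d R J (ketbra v) *\<^sub>v w)
      = (\<Sum>i<d. \<Sum>k<d. \<Sum>j<J. cnj (u $ i) * (R j *\<^sub>v v) $ i * (cnj ((R j *\<^sub>v v) $ k) * w $ k))"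
    using assms kraus_map_carrier_mat[of d R J "ketbra v"]
    by (auto simp: cinner_eq_sum mult_mat_vec_index_sum kraus_map_ketbra_index
        sum_distrib_left sum_distrib_right mult_ac intro!: sum.cong simp del: index_mult_mat_vec)
  also have "\<dots> = (\<Sum>j<J. \<Sum>i<d. \<Sum>k<d. cnj (u $ i) * (R j *\<^sub>v v) $ i * (cnj ((R j *\<^sub>v v) $ k) * w $ k))"
    by (simp add: sum.swap[of _ "{..<J}"])
  also have "\<dots> = (\<Sum>j<J. cinner u (R j *\<^sub>v v) * cinner (R j *\<^sub>v v) w)"
    using assms by (auto simp: cinner_eq_sum[of _ d] sum_product intro!: sum.cong)
  finally show ?thesis .
qed

subsection \<open>Orthonormal families and projections\<close>

lemma cinner_span_family_right:
  assumes "\<forall>a<K. \<psi> a \<in> carrier_vec d" "u \<in> carrier_vec d"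
  shows "cinner u (vec d (\<lambda>i. \<Sum>a<K. c a * \<psi> a $ i)) = (\<Sum>a<K. c a * cinner u (\<psi> a))"
proof -
  have "cinner u (vec d (\<lambda>i. \<Sum>a<K. c a * \<psi> a $ i))
      = (\<Sum>i<d. \<Sum>a<K. c a * (cnj (u $ i) * \<psi> a $ i))"
    using assms by (simp add: cinner_eq_sum[of _ d] sum_distrib_left mult_ac)
  also have "\<dots> = (\<Sum>a<K. \<Sum>i<d. c a * (cnj (u $ i) * \<psi> a $ i))"
    by (rule sum.swap)
  also have "\<dots> = (\<Sum>a<K. c a * cinner u (\<psi> a))"
    using assms by (simp add: cinner_eq_sum[of _ d] sum_distrib_left)
  finally show ?thesis .
qed

lemma cinner_span_family_left:
  assumes "\<forall>a<K. \<psi> a \<in> carrier_vec d" "u \<in> carrier_vec d"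
  shows "cinner (vec d (\<lambda>i. \<Sum>a<K. c a * \<psi> a $ i)) u = (\<Sum>a<K. cnj (c a) * cinner (\<psi> a) u)"
proof -
  have "cinner (vec d (\<lambda>i. \<Sum>a<K. c a * \<psi> a $ i)) u = cnj (\<Sum>a<K. c a * cinner u (\<psi> a))"
    using assms by (simp add: cinner_commute_cnj[of _ d u] cinner_span_family_right)
  also have "\<dots> = (\<Sum>a<K. cnj (c a) * cinner (\<psi> a) u)"
    using assms by (simp add: cinner_commute_cnj[of u d])
  finally show ?thesis .
qed

lemma cinner_mult_mat_vec_span_family:
  assumes "A \<in> carrier_mat d d" "\<forall>a<K. \<psi> a \<in> carrier_vec d" "u \<in> carrier_vec d"
  shows "cinner u (A *\<^sub>v vec d (\<lambda>i. \<Sum>b<K. c b * \<psi> b $ i)) = (\<Sum>b<K. cinner u (A *\<^sub>v \<psi> b) * c b)"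
proof -
  have Au: "adj A *\<^sub>v u \<in> carrier_vec d"
    using assms adj_carrier_mat[OF assms(1)] by simp
  have "cinner u (A *\<^sub>v vec d (\<lambda>i. \<Sum>b<K. c b * \<psi> b $ i))
      = cinner (adj A *\<^sub>v u) (vec d (\<lambda>i. \<Sum>b<K. c b * \<psi> b $ i))"
    using assms by (intro cinner_mult_mat_vec_adj) auto
  also have "\<dots> = (\<Sum>b<K. c b * cinner (adj A *\<^sub>v u) (\<psi> b))"
    using assms(2) Au by (rule cinner_span_family_right)
  also have "\<dots> = (\<Sum>b<K. cinner u (A *\<^sub>v \<psi> b) * c b)"
    using assms by (intro sum.cong) (auto simp: cinner_mult_mat_vec_adj)
  finally show ?thesis .
qed

lemma orthonormal_family_cinner_span:
  assumes "orthonormal_family d \<psi> K" "a < K"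
  shows "cinner (\<psi> a) (vec d (\<lambda>i. \<Sum>b<K. c b * \<psi> b $ i)) = c a"
proof -
  have "cinner (\<psi> a) (vec d (\<lambda>i. \<Sum>b<K. c b * \<psi> b $ i)) = (\<Sum>b<K. c b * cinner (\<psi> a) (\<psi> b))"
    using assms by (intro cinner_span_family_right) (auto simp: orthonormal_family_def)
  also have "\<dots> = (\<Sum>b<K. if b = a then c b else 0)"
    using assms by (intro sum.cong) (auto simp: orthonormal_family_def)
  also have "\<dots> = c a"
    using assms(2) by simp
  finally show ?thesis .
qed

lemma orthonormal_family_unit_coeffs:
  assumes "orthonormal_family d \<psi> K"
    and "cinner (vec d (\<lambda>i. \<Sum>a<K. c a * \<psi> a $ i)) (vec d (\<lambda>i. \<Sum>a<K. c a * \<psi> a $ i)) = 1"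
  shows "(\<Sum>a<K. cmod (c a)^2) = 1"
proof -
  have "of_real (\<Sum>a<K. cmod (c a)^2) = (\<Sum>a<K. c a * cnj (c a))"
    unfolding of_real_sum by (simp only: complex_norm_square)
  also have "\<dots> = (\<Sum>a<K. cnj (c a) * c a)"
    by (simp add: mult.commute)
  also have "\<dots> = 1"
    using assms
    by (simp add: cinner_span_family_left orthonormal_family_cinner_span orthonormal_family_def)
  finally show ?thesis
    using of_real_eq_1_iff by blast
qed

lemma orthonormal_family_mem_span:
  assumes "orthonormal_family d \<psi> K" "a < K"
  shows "\<psi> a \<in> span_family d \<psi> K"
proof -
  have "(\<Sum>b<K. (if b = a then 1 else 0) * \<psi> b $ i) = \<psi> a $ i" for i
  proof -
    have "(\<Sum>b<K. (if b = a then 1 else 0) * \<psi> b $ i) = (\<Sum>b<K. if b = a then \<psi> b $ i else 0)"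
      by (rule sum.cong) auto
    then show ?thesis
      using assms(2) by simp
  qed
  then have "\<psi> a = vec d (\<lambda>i. \<Sum>b<K. (if b = a then 1 else 0) * \<psi> b $ i)"
    using assms by (intro eq_vecI) (auto simp: orthonormal_family_def)
  then show ?thesis
    unfolding span_family_def mem_Collect_eq by (intro exI[of _ "\<lambda>b. if b = a then 1 else 0"]) simp
qed

lemma orth_proj_fixes:
  assumes "is_orth_proj_onto d P S" "x \<in> S"
  shows "P *\<^sub>v x = x"
proof -
  obtain v where v: "v \<in> carrier_vec d" "x = P *\<^sub>v v"
    using assms unfolding is_orth_proj_onto_def by blast
  have P: "P \<in> carrier_mat d d" "P * P = P"
    using assms(1) unfolding is_orth_proj_onto_def by auto
  have "(P * P) *\<^sub>v v = P *\<^sub>v (P *\<^sub>v v)"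
    using v P by (intro assoc_mult_mat_vec) auto
  then show ?thesis
    using P v by simp
qed

lemma cinner_orth_proj_span_family:
  assumes orth: "orthonormal_family d \<psi> K" and proj: "is_orth_proj_onto d P (span_family d \<psi> K)"
    and w: "w \<in> carrier_vec d"
  shows "cinner w (P *\<^sub>v w) = of_real (\<Sum>a<K. cmod (cinner (\<psi> a) w)^2)"
proof -
  have P: "P \<in> carrier_mat d d" "adj P = P"
    using proj unfolding is_orth_proj_onto_def by auto
  have \<psi>: "\<forall>a<K. \<psi> a \<in> carrier_vec d"
    using orth unfolding orthonormal_family_def by auto
  obtain c where c: "P *\<^sub>v w = vec d (\<lambda>i. \<Sum>b<K. c b * \<psi> b $ i)"
    using proj w unfolding is_orth_proj_onto_def span_family_def by blast
  have coeff: "c a = cinner (\<psi> a) w" if "a < K" for a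
  proof -
    have "c a = cinner (\<psi> a) (P *\<^sub>v w)"
      using orthonormal_family_cinner_span[OF orth that] c by simp
    also have "\<dots> = cinner (P *\<^sub>v \<psi> a) w"
      using P \<psi> that w by (simp add: cinner_mult_mat_vec_adj)
    also have "\<dots> = cinner (\<psi> a) w"
      using orth_proj_fixes[OF proj orthonormal_family_mem_span[OF orth that]] by simp
    finally show ?thesis .
  qed
  have "cinner w (P *\<^sub>v w) = (\<Sum>b<K. c b * cinner w (\<psi> b))"
    unfolding c using \<psi> w by (rule cinner_span_family_right)
  also have "\<dots> = (\<Sum>b<K. cinner (\<psi> b) w * cnj (cinner (\<psi> b) w))"
    using \<psi> w coeff by (intro sum.cong) (auto intro: cinner_commute_cnj)
  also have "\<dots> = of_real (\<Sum>a<K. cmod (cinner (\<psi> a) w)^2)"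
    unfolding of_real_sum by (simp only: complex_norm_square)
  finally show ?thesis .
qed

subsection \<open>A Cauchy-Schwarz estimate\<close>

lemma cmod_sum_mult_sq_le:
  fixes E c :: "nat \<Rightarrow> complex"
  assumes "(\<Sum>b<K. cmod (c b)^2) = 1"
  shows "cmod (\<Sum>b<K. E b * c b)^2 \<le> (\<Sum>b<K. cmod (E b)^2)"
proof -
  have "cmod (\<Sum>b<K. E b * c b) \<le> (\<Sum>b<K. cmod (E b) * cmod (c b))"
    by (rule order_trans[OF norm_sum]) (simp add: norm_mult)
  then have "cmod (\<Sum>b<K. E b * c b)^2 \<le> (\<Sum>b<K. cmod (E b) * cmod (c b))^2"
    by (simp add: power_mono)
  also have "\<dots> \<le> (\<Sum>b<K. cmod (E b)^2) * (\<Sum>b<K. cmod (c b)^2)"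
    by (rule Cauchy_Schwarz_ineq_sum)
  finally show ?thesis
    using assms by simp
qed

lemma sum_cmod_sq_diff_proj_shift:
  fixes c z :: "nat \<Rightarrow> complex"
  assumes "(\<Sum>a<K. cmod (c a)^2) = 1"
  shows "(\<Sum>a<K. cmod (l * c a + z a)^2) - cmod (\<Sum>a<K. cnj (c a) * (l * c a + z a))^2
    = (\<Sum>a<K. cmod (z a)^2) - cmod (\<Sum>a<K. cnj (c a) * z a)^2"
proof -
  define w where "w = (\<Sum>a<K. cnj (c a) * z a)"
  have cc: "(\<Sum>a<K. c a * cnj (c a)) = 1"
  proof -
    have "(\<Sum>a<K. c a * cnj (c a)) = of_real (\<Sum>a<K. cmod (c a)^2)"
      unfolding of_real_sum by (simp only: complex_norm_square)
    then show ?thesis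
      using assms by simp
  qed
  have proj: "(\<Sum>a<K. cnj (c a) * (l * c a + z a)) = l + w"
  proof -
    have "(\<Sum>a<K. cnj (c a) * (l * c a + z a)) = l * (\<Sum>a<K. c a * cnj (c a)) + w"
      by (simp add: w_def algebra_simps sum.distrib sum_distrib_left)
    then show ?thesis
      using cc by simp
  qed
  have "of_real (\<Sum>a<K. cmod (l * c a + z a)^2) = (\<Sum>a<K. (l * c a + z a) * cnj (l * c a + z a))"
    unfolding of_real_sum by (simp only: complex_norm_square)
  also have "\<dots> = l * cnj l * (\<Sum>a<K. c a * cnj (c a)) + l * (\<Sum>a<K. c a * cnj (z a))
      + cnj l * w + (\<Sum>a<K. z a * cnj (z a))"
    by (simp add: w_def algebra_simps sum.distrib sum_distrib_left)
  also have "\<dots> = l * cnj l + l * cnj w + cnj l * w + (\<Sum>a<K. z a * cnj (z a))"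
    unfolding cc w_def by simp
  also have "\<dots> = of_real (cmod (l + w)^2 + ((\<Sum>a<K. cmod (z a)^2) - cmod w ^2))"
    unfolding of_real_add of_real_diff of_real_sum complex_norm_square by (simp add: algebra_simps)
  finally have "(\<Sum>a<K. cmod (l * c a + z a)^2) = cmod (l + w)^2 + ((\<Sum>a<K. cmod (z a)^2) - cmod w ^2)"
    by (rule of_real_eq_iff[THEN iffD1])
  then show ?thesis
    unfolding proj w_def by simp
qed

lemma sum_cmod_sq_diff_proj_le:
  fixes c :: "nat \<Rightarrow> complex" and M :: "nat \<Rightarrow> nat \<Rightarrow> complex"
  assumes unit: "(\<Sum>a<K. cmod (c a)^2) = 1"
  shows "(\<Sum>a<K. cmod (\<Sum>b<K. M a b * c b)^2) - cmod (\<Sum>a<K. cnj (c a) * (\<Sum>b<K. M a b * c b))^2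
    \<le> (\<Sum>a<K. \<Sum>b<K. cmod (M a b - (if a = b then l else 0))^2)"
proof -
  define z where "z a = (\<Sum>b<K. (M a b - (if a = b then l else 0)) * c b)" for a
  have "(\<Sum>b<K. M a b * c b) = l * c a + z a" if "a < K" for a
  proof -
    have "(\<Sum>b<K. M a b * c b) = (\<Sum>b<K. (M a b - (if a = b then l else 0)) * c b + (if a = b then l * c b else 0))"
      by (rule sum.cong) (auto simp: algebra_simps)
    then show ?thesis
      using that by (simp add: sum.distrib z_def)
  qed
  then have "(\<Sum>a<K. cmod (\<Sum>b<K. M a b * c b)^2) - cmod (\<Sum>a<K. cnj (c a) * (\<Sum>b<K. M a b * c b))^2
      = (\<Sum>a<K. cmod (l * c a + z a)^2) - cmod (\<Sum>a<K. cnj (c a) * (l * c a + z a))^2"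
    by simp
  also have "\<dots> = (\<Sum>a<K. cmod (z a)^2) - cmod (\<Sum>a<K. cnj (c a) * z a)^2"
    using unit by (rule sum_cmod_sq_diff_proj_shift)
  also have "\<dots> \<le> (\<Sum>a<K. cmod (z a)^2)"
    by simp
  also have "\<dots> \<le> (\<Sum>a<K. \<Sum>b<K. cmod (M a b - (if a = b then l else 0))^2)"
    unfolding z_def using unit by (intro sum_mono cmod_sum_mult_sq_le)
  finally show ?thesis .
qed

subsection \<open>The detection bound\<close>

text \<open>Deviation of the basis pair \<open>(a, b)\<close> from the Knill-Laflamme conditions.\<close>

definition kl_defect :: "(nat \<Rightarrow> complex mat) \<Rightarrow> nat \<Rightarrow> (nat \<Rightarrow> complex vec) \<Rightarrow> nat \<Rightarrow> nat \<Rightarrow> real" where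
  "kl_defect R J \<psi> a b = (\<Sum>j<J. (cmod (cinner (\<psi> a) (R j *\<^sub>v \<psi> b)
      - (if a = b then cinner (\<psi> 0) (R j *\<^sub>v \<psi> 0) else 0)))\<^sup>2)"

lemma eps_approx_eq_Max:
  "eps_approx R J \<psi> K = Max ((\<lambda>(a, b). kl_defect R J \<psi> a b) ` ({..<K} \<times> {..<K}))"
proof -
  have "{kl_defect R J \<psi> a b | a b. a < K \<and> b < K} = (\<lambda>(a, b). kl_defect R J \<psi> a b) ` ({..<K} \<times> {..<K})"
    by auto
  then show ?thesis
    unfolding eps_approx_def kl_defect_def by simp
qed

lemma kl_defect_le_eps_approx:
  "a < K \<Longrightarrow> b < K \<Longrightarrow> kl_defect R J \<psi> a b \<le> eps_approx R J \<psi> K"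
  unfolding eps_approx_eq_Max by (rule Max_ge) auto

lemma eps_approx_nonneg: "0 < K \<Longrightarrow> 0 \<le> eps_approx R J \<psi> K"
  using kl_defect_le_eps_approx[where a = 0 and b = 0] by (simp add: kl_defect_def sum_nonneg order_trans)

lemma detection_probability_eq:
  assumes R: "\<forall>j<J. R j \<in> carrier_mat d d" and orth: "orthonormal_family d \<psi> K"
    and proj: "is_orth_proj_onto d P (span_family d \<psi> K)" and \<Psi>: "\<Psi> \<in> carrier_vec d"
  shows "mtrace (P * kraus_map d R J (ketbra \<Psi>)) = of_real (\<Sum>j<J. \<Sum>a<K. cmod (cinner (\<psi> a) (R j *\<^sub>v \<Psi>))^2)"
proof -
  have P: "P \<in> carrier_mat d d"
    using proj unfolding is_orth_proj_onto_def by simp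
  have "mtrace (P * kraus_map d R J (ketbra \<Psi>)) = (\<Sum>j<J. cinner (R j *\<^sub>v \<Psi>) (P *\<^sub>v (R j *\<^sub>v \<Psi>)))"
    using R \<Psi> P by (rule mtrace_mult_kraus_map_ketbra)
  also have "\<dots> = (\<Sum>j<J. of_real (\<Sum>a<K. cmod (cinner (\<psi> a) (R j *\<^sub>v \<Psi>))^2))"
    using R \<Psi> by (intro sum.cong refl cinner_orth_proj_span_family[OF orth proj]) auto
  finally show ?thesis
    by (simp only: of_real_sum)
qed

lemma detection_overlap_eq:
  assumes R: "\<forall>j<J. R j \<in> carrier_mat d d" and P: "P \<in> carrier_mat d d" "adj P = P"
    and \<Psi>: "\<Psi> \<in> carrier_vec d" "P *\<^sub>v \<Psi> = \<Psi>"
  shows "cinner \<Psi> ((s \<cdot>\<^sub>m (P * kraus_map d R J (ketbra \<Psi>) * P)) *\<^sub>v \<Psi>)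
    = s * of_real (\<Sum>j<J. cmod (cinner \<Psi> (R j *\<^sub>v \<Psi>))^2)"
proof -
  define N where "N = kraus_map d R J (ketbra \<Psi>)"
  have N: "N \<in> carrier_mat d d"
    by (simp add: N_def kraus_map_carrier_mat)
  have "(P * N * P) *\<^sub>v \<Psi> = P *\<^sub>v (N *\<^sub>v \<Psi>)"
    using P \<Psi> N by (simp add: assoc_mult_mat_vec[of _ d d _ d])
  then have "cinner \<Psi> ((s \<cdot>\<^sub>m (P * N * P)) *\<^sub>v \<Psi>) = s * cinner \<Psi> (P *\<^sub>v (N *\<^sub>v \<Psi>))"
    using P \<Psi> N by (simp add: cinner_smult_mat_vec[of _ d])
  also have "cinner \<Psi> (P *\<^sub>v (N *\<^sub>v \<Psi>)) = cinner \<Psi> (N *\<^sub>v \<Psi>)"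
    using P \<Psi> N by (simp add: cinner_mult_mat_vec_adj[of P d])
  also have "\<dots> = (\<Sum>j<J. cinner \<Psi> (R j *\<^sub>v \<Psi>) * cinner (R j *\<^sub>v \<Psi>) \<Psi>)"
    unfolding N_def by (rule cinner_kraus_map_ketbra[OF R \<Psi>(1) \<Psi>(1) \<Psi>(1)])
  also have "\<dots> = of_real (\<Sum>j<J. cmod (cinner \<Psi> (R j *\<^sub>v \<Psi>))^2)"
    unfolding of_real_sum complex_norm_square
  proof (intro sum.cong refl)
    fix j assume "j \<in> {..<J}"
    then have "R j *\<^sub>v \<Psi> \<in> carrier_vec d"
      using R \<Psi>(1) by auto
    then show "cinner \<Psi> (R j *\<^sub>v \<Psi>) * cinner (R j *\<^sub>v \<Psi>) \<Psi>
        = cinner \<Psi> (R j *\<^sub>v \<Psi>) * cnj (cinner \<Psi> (R j *\<^sub>v \<Psi>))"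
      using \<Psi>(1) by (simp add: cinner_commute_cnj[of _ d \<Psi>])
  qed
  finally show ?thesis
    by (simp add: N_def)
qed

lemma detection_loss_le:
  assumes R: "\<forall>j<J. R j \<in> carrier_mat d d" and orth: "orthonormal_family d \<psi> K"
    and \<Psi>: "\<Psi> \<in> span_family d \<psi> K" "cinner \<Psi> \<Psi> = 1"
  shows "(\<Sum>j<J. \<Sum>a<K. cmod (cinner (\<psi> a) (R j *\<^sub>v \<Psi>))^2) - (\<Sum>j<J. cmod (cinner \<Psi> (R j *\<^sub>v \<Psi>))^2)
    \<le> real K ^ 2 * eps_approx R J \<psi> K"
proof -
  have \<psi>: "\<forall>a<K. \<psi> a \<in> carrier_vec d"
    using orth unfolding orthonormal_family_def by simp
  obtain c where c: "\<Psi> = vec d (\<lambda>i. \<Sum>a<K. c a * \<psi> a $ i)"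
    using \<Psi>(1) unfolding span_family_def by blast
  have unit: "(\<Sum>a<K. cmod (c a)^2) = 1"
    using orthonormal_family_unit_coeffs[OF orth] \<Psi>(2) c by simp
  define M where "M j a b = cinner (\<psi> a) (R j *\<^sub>v \<psi> b)" for j a b
  have coeff: "cinner (\<psi> a) (R j *\<^sub>v \<Psi>) = (\<Sum>b<K. M j a b * c b)" if "a < K" "j < J" for a j
    unfolding c M_def using R \<psi> that by (intro cinner_mult_mat_vec_span_family) auto
  have overlap: "cinner \<Psi> (R j *\<^sub>v \<Psi>) = (\<Sum>a<K. cnj (c a) * (\<Sum>b<K. M j a b * c b))" if "j < J" for j
  proof -
    have R\<Psi>: "R j *\<^sub>v \<Psi> \<in> carrier_vec d"
      using R that c by auto
    have "cinner \<Psi> (R j *\<^sub>v \<Psi>) = (\<Sum>a<K. cnj (c a) * cinner (\<psi> a) (R j *\<^sub>v \<Psi>))"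
      using cinner_span_family_left[OF \<psi> R\<Psi>, of c] unfolding c[symmetric] .
    then show ?thesis
      using that by (simp add: coeff)
  qed
  have "(\<Sum>j<J. \<Sum>a<K. cmod (cinner (\<psi> a) (R j *\<^sub>v \<Psi>))^2) - (\<Sum>j<J. cmod (cinner \<Psi> (R j *\<^sub>v \<Psi>))^2)
      = (\<Sum>j<J. (\<Sum>a<K. cmod (\<Sum>b<K. M j a b * c b)^2)
          - cmod (\<Sum>a<K. cnj (c a) * (\<Sum>b<K. M j a b * c b))^2)"
    by (simp add: sum_subtractf coeff overlap)
  also have "\<dots> \<le> (\<Sum>j<J. \<Sum>a<K. \<Sum>b<K. cmod (M j a b - (if a = b then M j 0 0 else 0))^2)"
    using unit by (intro sum_mono sum_cmod_sq_diff_proj_le)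
  also have "\<dots> = (\<Sum>a<K. \<Sum>b<K. kl_defect R J \<psi> a b)"
    unfolding kl_defect_def M_def
    by (subst sum.swap, rule sum.cong[OF refl], subst sum.swap, simp)
  also have "\<dots> \<le> (\<Sum>a<K. \<Sum>b<K. eps_approx R J \<psi> K)"
    by (intro sum_mono kl_defect_le_eps_approx) auto
  also have "\<dots> = real K ^ 2 * eps_approx R J \<psi> K"
    by (simp add: power2_eq_square)
  finally show ?thesis .
qed

lemma one_minus_div_le_div:
  fixes S T x \<delta> :: real
  assumes "0 < \<delta>" "\<delta> \<le> T" "T - S \<le> x" "0 \<le> x"
  shows "1 - x / \<delta> \<le> S / T"
proof -
  have "x / T \<le> x / \<delta>"
    using assms by (intro divide_left_mono) auto
  moreover have "(T - S) / T \<le> x / T"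
    using assms by (intro divide_right_mono) auto
  moreover have "S / T = 1 - (T - S) / T"
    using assms by (simp add: field_simps)
  ultimately show ?thesis
    by linarith
qed

lemma detection_fidelity_ge:
  assumes R: "\<forall>j<J. R j \<in> carrier_mat d d" and orth: "orthonormal_family d \<psi> K"
    and proj: "is_orth_proj_onto d P (span_family d \<psi> K)"
    and \<Psi>: "\<Psi> \<in> span_family d \<psi> K" "cinner \<Psi> \<Psi> = 1"
    and "0 < \<delta>" and detected: "\<delta> \<le> Re (mtrace (P * kraus_map d R J (ketbra \<Psi>)))"
  shows "1 - real K ^ 2 * eps_approx R J \<psi> K / \<delta>
    \<le> Re (cinner \<Psi> ((1 / mtrace (P * kraus_map d R J (ketbra \<Psi>)) \<cdot>\<^sub>m
        (P * kraus_map d R J (ketbra \<Psi>) * P)) *\<^sub>v \<Psi>))"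
proof -
  have P: "P \<in> carrier_mat d d" "adj P = P"
    using proj unfolding is_orth_proj_onto_def by simp_all
  have \<Psi>_carrier: "\<Psi> \<in> carrier_vec d"
    using \<Psi>(1) unfolding span_family_def by auto
  define T where "T = (\<Sum>j<J. \<Sum>a<K. cmod (cinner (\<psi> a) (R j *\<^sub>v \<Psi>))^2)"
  define S where "S = (\<Sum>j<J. cmod (cinner \<Psi> (R j *\<^sub>v \<Psi>))^2)"
  have trace: "mtrace (P * kraus_map d R J (ketbra \<Psi>)) = of_real T"
    unfolding T_def using R orth proj \<Psi>_carrier by (rule detection_probability_eq)
  have overlap: "cinner \<Psi> ((s \<cdot>\<^sub>m (P * kraus_map d R J (ketbra \<Psi>) * P)) *\<^sub>v \<Psi>) = s * of_real S" for s
    unfolding S_def using R P \<Psi>_carrier orth_proj_fixes[OF proj \<Psi>(1)] by (rule detection_overlap_eq)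
  have "T - S \<le> real K ^ 2 * eps_approx R J \<psi> K"
    unfolding T_def S_def using R orth \<Psi> by (rule detection_loss_le)
  moreover have "\<delta> \<le> T"
    using detected trace by simp
  moreover have "0 \<le> eps_approx R J \<psi> K"
    using \<open>\<delta> \<le> T\<close> \<open>0 < \<delta>\<close> by (cases "K = 0") (simp_all add: T_def eps_approx_nonneg)
  ultimately show ?thesis
    unfolding overlap trace using \<open>0 < \<delta>\<close> by (simp add: Re_divide_of_real one_minus_div_le_div)
qed

theorem theorem1:
  fixes p n J K :: nat and R :: "nat \<Rightarrow> complex mat" and \<psi> :: "nat \<Rightarrow> complex vec"
    and P :: "complex mat" and \<delta> :: real
  assumes "is_CPTP_kraus (p ^ n) R J"
    and "K \<ge> 1"
    and "orthonormal_family (p ^ n) \<psi> K"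
    and "is_orth_proj_onto (p ^ n) P (span_family (p ^ n) \<psi> K)"
    and "\<delta> > real K ^ 5 * eps_approx R J \<psi> K"
  shows "approx_detection_code (p ^ n) R J P (span_family (p ^ n) \<psi> K)
           (real K ^ 5 * eps_approx R J \<psi> K / \<delta>) \<delta>"
proof -
  define e where "e = eps_approx R J \<psi> K"
  have R: "\<forall>j<J. R j \<in> carrier_mat (p ^ n) (p ^ n)"
    using assms(1) unfolding is_CPTP_kraus_def by simp
  have "0 \<le> e"
    using assms(2) eps_approx_nonneg unfolding e_def by simp
  then have "real K ^ 2 * e \<le> real K ^ 5 * e"
    using assms(2) by (intro mult_right_mono power_increasing) auto
  have "0 \<le> real K ^ 5 * e"
    using \<open>0 \<le> e\<close> by simp
  then have "0 < \<delta>"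
    using assms(5) unfolding e_def by linarith
  with \<open>real K ^ 2 * e \<le> real K ^ 5 * e\<close> have weaken: "real K ^ 2 * e / \<delta> \<le> real K ^ 5 * e / \<delta>"
    by (simp add: divide_right_mono)
  show ?thesis
    unfolding approx_detection_code_def Let_def e_def[symmetric]
  proof (intro ballI impI)
    fix \<Psi> assume \<Psi>: "\<Psi> \<in> span_family (p ^ n) \<psi> K" "\<Psi> \<in> carrier_vec (p ^ n)" "cinner \<Psi> \<Psi> = 1"
      and detected: "\<delta> \<le> Re (mtrace (P * kraus_map (p ^ n) R J (ketbra \<Psi>)))"
    show "1 - real K ^ 5 * e / \<delta> \<le> Re (cinner \<Psi> ((1 / mtrace (P * kraus_map (p ^ n) R J (ketbra \<Psi>)) \<cdot>\<^sub>m
        (P * kraus_map (p ^ n) R J (ketbra \<Psi>) * P)) *\<^sub>v \<Psi>))"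
      using detection_fidelity_ge[OF R assms(3,4) \<Psi>(1,3) \<open>0 < \<delta>\<close> detected] weaken
      unfolding e_def by linarith
  qed
qed

end
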